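(* Let $\langle V, Q\rangle$ be a Federated Byzantine Agreement System with quorum slice cardinality map $C$. For each $v\in V$ let $\bar q_v=\bigcup_{q\in Q(v)} q$. Define functions $F_i : V\to\mathbb{N}$ for $i\geq 0$ by $F_0(v)=C(v)$ and, for $i\ge 0$, letting $S_i^{v}$ be the sequence of values $(F_i(v') : v'\in \bar q_v)$ sorted in ascending order (one entry per node of $\bar q_v$) and $S_i^v[C(v)]$ its $C(v)$-th element (1-indexed), $$F_{i+1}(v)=\max\{S_i^v[C(v)],\ F_i(v)\}.$$ Then for every $i\geq 0$, every $v\in V$ and every quorum $U$ with $v\in U$, we have $F_i(v)\leq |U|$.
   Context: An FBAS is a pair $\langle V, Q\rangle$ where $V$ is a finite set of nodes and $Q : V \to 2^{2^V}\setminus\{\varnothing\}$ assigns to each node a nonempty collection of subsets of $V$ (its quorum slices), such that for all $v\in V$ and all $q\in Q(v)$, $v \in q$. A set $U \subseteq V$ is a quorum iff $U\neq\varnothing$ and for every $u\in U$ there exists $q \in Q(u)$ with $q\subseteq U$. The quorum slice cardinality map is $C(v)=\min\{|q| : q\in Q(v)\}$. *)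

theory Defs
  imports Main "HOL-Library.Multiset"
begin

definition fbas :: "'a set \<Rightarrow> ('a \<Rightarrow> 'a set set) \<Rightarrow> bool" where
  "fbas V Q \<longleftrightarrow> finite V \<and>
     (\<forall>v\<in>V. Q v \<noteq> {} \<and> (\<forall>q\<in>Q v. q \<subseteq> V \<and> v \<in> q))"

definition quorum :: "'a set \<Rightarrow> ('a \<Rightarrow> 'a set set) \<Rightarrow> 'a set \<Rightarrow> bool" where
  "quorum V Q U \<longleftrightarrow> U \<subseteq> V \<and> U \<noteq> {} \<and> (\<forall>u\<in>U. \<exists>q\<in>Q u. q \<subseteq> U)"

definition slice_card :: "('a \<Rightarrow> 'a set set) \<Rightarrow> 'a \<Rightarrow> nat" where
  "slice_card Q v = Min (card ` Q v)"

definition qbar :: "('a \<Rightarrow> 'a set set) \<Rightarrow> 'a \<Rightarrow> 'a set" where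
  "qbar Q v = \<Union> (Q v)"

definition sorted_vals :: "('a \<Rightarrow> nat) \<Rightarrow> ('a \<Rightarrow> 'a set set) \<Rightarrow> 'a \<Rightarrow> nat list" where
  "sorted_vals F Q v = sorted_list_of_multiset (image_mset F (mset_set (qbar Q v)))"

text \<open>F_0 = C; F_{i+1}(v) = max (S_i^v[C(v)]) (F_i v), with 1-indexed access.\<close>
primrec Fseq :: "('a \<Rightarrow> 'a set set) \<Rightarrow> nat \<Rightarrow> 'a \<Rightarrow> nat" where
  "Fseq Q 0 = slice_card Q"
| "Fseq Q (Suc i) = (\<lambda>v. max (sorted_vals (Fseq Q i) Q v ! (slice_card Q v - 1)) (Fseq Q i v))"

end

theory Submission
  imports Defs
begin

(* A quorum U containing v contains a slice q of v, so C(v) <= |q| <= |U|.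
   In the step, F_i is bounded by |U| on q (a subset of U) by induction, and q is part of qbar v;
   so at least |q| >= C(v) entries of S_i^v are at most |U|, and hence so is its C(v)-th entry. *)

lemma sorted_nth_le_if_length_filter_gt:
  fixes xs :: "'a::linorder list"
  assumes "sorted xs" and "j < length (filter (\<lambda>x. x \<le> b) xs)"
  shows "xs ! j \<le> b"
proof (rule ccontr)
  assume "\<not> xs ! j \<le> b"
  with \<open>sorted xs\<close> have "{i. i < length xs \<and> xs ! i \<le> b} \<subseteq> {..<j}"
    by (auto dest: sorted_nth_mono[of xs j] simp: not_less)
  then have "card {i. i < length xs \<and> xs ! i \<le> b} \<le> j"
    using card_mono[of "{..<j}"] by fastforce
  with assms(2) show False by (simp add: length_filter_conv_card)
qed

lemma sorted_list_of_multiset_nth_le: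
  fixes M :: "'a::linorder multiset"
  assumes "A \<subseteq># M" and "\<forall>x\<in>#A. x \<le> b" and "j < size A"
  shows "sorted_list_of_multiset M ! j \<le> b"
proof (rule sorted_nth_le_if_length_filter_gt)
  have "A \<subseteq># filter_mset (\<lambda>x. x \<le> b) M"
    using filter_mset_mono_strong[OF assms(1), of "\<lambda>_. True" "\<lambda>x. x \<le> b"] assms(2) by simp
  then have "size A \<le> size (filter_mset (\<lambda>x. x \<le> b) M)"
    by (rule size_mset_mono)
  also have "\<dots> = length (filter (\<lambda>x. x \<le> b) (sorted_list_of_multiset M))"
    using size_mset[of "filter (\<lambda>x. x \<le> b) (sorted_list_of_multiset M)"] by simp
  finally show "j < length (filter (\<lambda>x. x \<le> b) (sorted_list_of_multiset M))"
    using assms(3) by simp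
qed simp

lemma fbas_finitely_many_slices:
  assumes "fbas V Q" and "v \<in> V"
  shows "finite (Q v)"
proof (rule finite_subset)
  show "Q v \<subseteq> Pow V" using assms unfolding fbas_def by auto
  show "finite (Pow V)" using assms(1) unfolding fbas_def by simp
qed

lemma fbas_finite_slice:
  assumes "fbas V Q" and "v \<in> V" and "q \<in> Q v"
  shows "finite q"
proof (rule finite_subset)
  show "q \<subseteq> V" using assms unfolding fbas_def by auto
  show "finite V" using assms(1) unfolding fbas_def by simp
qed

lemma fbas_finite_qbar:
  assumes "fbas V Q" and "v \<in> V"
  shows "finite (qbar Q v)"
proof (rule finite_subset)
  show "qbar Q v \<subseteq> V" using assms unfolding fbas_def qbar_def by auto
  show "finite V" using assms(1) unfolding fbas_def by simp
qed

lemma slice_card_le: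
  assumes "fbas V Q" and "v \<in> V" and "q \<in> Q v"
  shows "slice_card Q v \<le> card q"
  using fbas_finitely_many_slices[OF assms(1,2)] assms(3) unfolding slice_card_def by simp

lemma slice_card_pos:
  assumes "fbas V Q" and "v \<in> V"
  shows "0 < slice_card Q v"
proof -
  have "finite (Q v)" using fbas_finitely_many_slices[OF assms] .
  moreover have "Q v \<noteq> {}" using assms unfolding fbas_def by auto
  ultimately have "slice_card Q v \<in> card ` Q v" unfolding slice_card_def by (intro Min_in) auto
  then obtain q where "q \<in> Q v" "slice_card Q v = card q" by auto
  moreover have "v \<in> q" using assms \<open>q \<in> Q v\<close> unfolding fbas_def by auto
  moreover have "finite q" using fbas_finite_slice[OF assms \<open>q \<in> Q v\<close>] .
  ultimately show ?thesis using card_gt_0_iff by auto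
qed

lemma sorted_vals_slice_card_nth_le:
  assumes "fbas V Q" and "v \<in> V" and "q \<in> Q v" and "\<forall>u\<in>q. F u \<le> b"
  shows "sorted_vals F Q v ! (slice_card Q v - 1) \<le> b"
  unfolding sorted_vals_def
proof (rule sorted_list_of_multiset_nth_le)
  have "q \<subseteq> qbar Q v" using assms(3) unfolding qbar_def by auto
  then show "image_mset F (mset_set q) \<subseteq># image_mset F (mset_set (qbar Q v))"
    using fbas_finite_qbar[OF assms(1,2)] fbas_finite_slice[OF assms(1-3)]
    by (intro image_mset_subseteq_mono) simp
  show "\<forall>x\<in>#image_mset F (mset_set q). x \<le> b"
    using assms(4) fbas_finite_slice[OF assms(1-3)] by auto
  show "slice_card Q v - 1 < size (image_mset F (mset_set q))"
    using slice_card_le[OF assms(1-3)] slice_card_pos[OF assms(1,2)] by simp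
qed

lemma quorum_contains_slice:
  assumes "quorum V Q U" and "u \<in> U"
  obtains q where "q \<in> Q u" and "q \<subseteq> U"
  using assms unfolding quorum_def by blast

theorem mainTheorem3:
  assumes "fbas V Q"
    and "quorum V Q U"
    and "v \<in> U"
  shows "Fseq Q i v \<le> card U"
  using assms(3)
proof (induction i arbitrary: v)
  case (0 v)
  obtain q where q: "q \<in> Q v" "q \<subseteq> U" using quorum_contains_slice[OF assms(2) 0] .
  have "U \<subseteq> V" and "finite V" using assms(1,2) unfolding fbas_def quorum_def by auto
  with 0 have "v \<in> V" and "finite U" by (auto intro: finite_subset)
  have "slice_card Q v \<le> card q" using slice_card_le[OF assms(1) \<open>v \<in> V\<close> q(1)] .
  also have "\<dots> \<le> card U" using card_mono[OF \<open>finite U\<close> q(2)] .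
  finally show ?case by simp
next
  case (Suc i v)
  obtain q where q: "q \<in> Q v" "q \<subseteq> U" using quorum_contains_slice[OF assms(2) Suc.prems] .
  have "v \<in> V" using assms(2) Suc.prems unfolding quorum_def by auto
  have "\<forall>u\<in>q. Fseq Q i u \<le> card U" using Suc.IH q(2) by blast
  then have "sorted_vals (Fseq Q i) Q v ! (slice_card Q v - 1) \<le> card U"
    using sorted_vals_slice_card_nth_le[OF assms(1) \<open>v \<in> V\<close> q(1)] by blast
  with Suc.IH[OF Suc.prems] show ?case by simp
qed

end
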